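(* Let $A\in H_n$ and $B\in H_k$. Then there exists a positive trace-preserving linear map $\Phi:H_n\to H_k$ with $\Phi(A)=B$ if and only if $\operatorname{tr}A=\operatorname{tr}B$, $\|A_+\|_1\geq\|B_+\|_1$ and $\|A_-\|_1\geq\|B_-\|_1$.
   Context: $H_n$ denotes the real vector space of $n\times n$ complex Hermitian matrices; $X\geq0$ means $X$ is positive semidefinite. A linear map $\Phi:H_n\to H_k$ is positive if $\Phi(X)\geq0$ for all $X\geq0$, and trace-preserving if $\operatorname{tr}\Phi(X)=\operatorname{tr}X$ for all $X\in H_n$. Every $A\in H_n$ decomposes uniquely as $A=A_+-A_-$ with $A_+,A_-$ positive semidefinite and $A_+A_-=0$. $\|\cdot\|_1$ is the trace norm (sum of singular values). *)

theory Defs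
  imports "HOL-Analysis.Analysis"
begin

definition conj_transpose :: "complex^'n^'m \<Rightarrow> complex^'m^'n" where
  "conj_transpose M = (\<chi> i j. cnj (M $ j $ i))"

definition hermitian :: "complex^'n^'n \<Rightarrow> bool" where
  "hermitian M \<longleftrightarrow> conj_transpose M = M"

definition psd :: "complex^'n^'n \<Rightarrow> bool" where
  "psd M \<longleftrightarrow> hermitian M \<and>
     (\<forall>x :: complex^'n. 0 \<le> Re (\<Sum>i\<in>UNIV. cnj (x $ i) * (M *v x) $ i))"

definition pos_part :: "complex^'n^'n \<Rightarrow> complex^'n^'n" where
  "pos_part A = (THE P. \<exists>N. psd P \<and> psd N \<and> A = P - N \<and> P ** N = 0)"

definition neg_part :: "complex^'n^'n \<Rightarrow> complex^'n^'n" where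
  "neg_part A = (THE N. \<exists>P. psd P \<and> psd N \<and> A = P - N \<and> P ** N = 0)"

definition psd_sqrt :: "complex^'n^'n \<Rightarrow> complex^'n^'n" where
  "psd_sqrt Y = (THE R. psd R \<and> R ** R = Y)"

text \<open>Trace norm = sum of singular values = trace of |X| = sqrt(X* X).\<close>
definition trace_norm :: "complex^'n^'n \<Rightarrow> real" where
  "trace_norm X = Re (trace (psd_sqrt (conj_transpose X ** X)))"

end

theory Submission
  imports Defs
begin

text \<open>Everything rests on the spectral theorem for Hermitian matrices, proved here by maximising the
  Rayleigh quotient on invariant subspaces. Necessity: \<open>\<Phi> A = \<Phi> A\<^sub>+ - \<Phi> A\<^sub>-\<close> is a difference
  of positive semidefinite matrices with traces \<open>\<parallel>A\<^sub>+\<parallel>\<^sub>1\<close> and \<open>\<parallel>A\<^sub>-\<parallel>\<^sub>1\<close>, and whenever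
  \<open>B = C - D\<close> with \<open>C, D \<ge> 0\<close>, testing \<open>B\<close> on its own eigenvectors shows that its positive
  eigenvalues sum to at most \<open>tr C\<close>. Sufficiency: a measure-and-prepare map, which weighs \<open>X\<close>
  on the positive eigenspace of \<open>A\<close> and on its complement and outputs correspondingly scaled
  density matrices built from \<open>B\<^sub>+\<close> and \<open>B\<^sub>-\<close>.\<close>

definition cinner :: "complex^'n \<Rightarrow> complex^'n \<Rightarrow> complex" where
  "cinner x y = (\<Sum>i\<in>UNIV. cnj (x$i) * y$i)"

definition quad_form :: "complex^'n^'n \<Rightarrow> complex^'n \<Rightarrow> real" where
  "quad_form M x = Re (cinner x (M *v x))"

lemma vector_scaleR_complex_component: "(r *\<^sub>R (x::complex^'n)) $ i = of_real r * x $ i"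
  unfolding vector_scaleR_component by (rule scaleR_conv_of_real)

lemma matrix_scaleR_complex_component: "(r *\<^sub>R (M::complex^'n^'m)) $ i $ j = of_real r * M $ i $ j"
  unfolding vector_scaleR_component by (rule scaleR_conv_of_real)

lemma scaleR_eq_of_real_smult: "r *\<^sub>R (x::complex^'n) = of_real r *s x"
  by (simp add: vec_eq_iff vector_scaleR_complex_component del: vector_scaleR_component)

lemma cinner_add_right: "cinner x (y + z) = cinner x y + cinner x z"
  by (simp add: cinner_def distrib_left sum.distrib)

lemma cinner_add_left: "cinner (x + y) z = cinner x z + cinner y z"
  by (simp add: cinner_def distrib_right sum.distrib)

lemma cinner_diff_right: "cinner x (y - z) = cinner x y - cinner x z"
  by (simp add: cinner_def right_diff_distrib sum_subtractf)

lemma cinner_smult_right: "cinner x (c *s y) = c * cinner x y"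
  by (simp add: cinner_def sum_distrib_left ac_simps)

lemma cinner_smult_left: "cinner (c *s x) y = cnj c * cinner x y"
  by (simp add: cinner_def sum_distrib_left ac_simps)

lemma cinner_scaleR_right: "cinner x (r *\<^sub>R y) = of_real r * cinner x y"
  by (simp add: cinner_def sum_distrib_left vector_scaleR_complex_component mult.left_commute
      del: vector_scaleR_component)

lemma cinner_scaleR_left: "cinner (r *\<^sub>R x) y = of_real r * cinner x y"
  by (simp add: cinner_def sum_distrib_left vector_scaleR_complex_component mult.assoc
      del: vector_scaleR_component)

lemma cinner_zero_right [simp]: "cinner x 0 = 0"
  by (simp add: cinner_def)

lemma cinner_sum_right: "cinner x (\<Sum>i\<in>I. f i) = (\<Sum>i\<in>I. cinner x (f i))"
  by (induction I rule: infinite_finite_induct) (auto simp: cinner_add_right)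

lemma cnj_cinner: "cnj (cinner x y) = cinner y x"
  by (simp add: cinner_def ac_simps)

lemma cinner_self: "cinner x x = of_real ((norm x)\<^sup>2)"
proof -
  have "cinner x x = (\<Sum>i\<in>UNIV. of_real ((cmod (x$i))\<^sup>2))"
    unfolding cinner_def by (intro sum.cong refl) (metis complex_norm_square mult.commute)
  also have "\<dots> = of_real (\<Sum>i\<in>UNIV. (cmod (x$i))\<^sup>2)"
    by simp
  also have "(\<Sum>i\<in>UNIV. (cmod (x$i))\<^sup>2) = (norm x)\<^sup>2"
    by (simp add: norm_vec_def L2_set_def sum_nonneg)
  finally show ?thesis .
qed

lemma matrix_vector_mult_smult: "(M::'a::comm_semiring_1^'n^'m) *v (c *s x) = c *s (M *v x)"
  by (simp add: matrix_vector_mult_def vec_eq_iff sum_distrib_left mult.left_commute)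

lemma matrix_vector_mult_scaleR_complex: "M *v (r *\<^sub>R x) = r *\<^sub>R (M *v (x::complex^'n))"
  by (simp add: matrix_vector_mult_def vec_eq_iff sum_distrib_left mult.left_commute
      vector_scaleR_complex_component del: vector_scaleR_component)

lemma scaleR_matrix_vector_mult_complex: "(c *\<^sub>R (M::complex^'n^'m)) *v x = c *\<^sub>R (M *v x)"
  by (simp add: matrix_vector_mult_def vec_eq_iff matrix_scaleR_complex_component
      vector_scaleR_complex_component sum_distrib_left mult.assoc del: vector_scaleR_component)

lemma matrix_vector_mult_sum: "M *v (\<Sum>i\<in>I. f i) = (\<Sum>i\<in>I. M *v f i)"
  by (induction I rule: infinite_finite_induct) (auto simp: matrix_vector_right_distrib)

lemma hermitian_cinner:
  assumes "hermitian M"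
  shows "cinner x (M *v y) = cinner (M *v x) y"
proof -
  have entry: "cnj (M$i$j) = M$j$i" for i j
    using assms unfolding hermitian_def conj_transpose_def by (metis vec_lambda_beta)
  have "cinner x (M *v y) = (\<Sum>i\<in>UNIV. \<Sum>j\<in>UNIV. cnj (x$i) * M$i$j * y$j)"
    by (simp add: cinner_def matrix_vector_mult_def sum_distrib_left ac_simps)
  also have "\<dots> = (\<Sum>j\<in>UNIV. \<Sum>i\<in>UNIV. cnj (x$i) * M$i$j * y$j)"
    by (rule sum.swap)
  also have "\<dots> = cinner (M *v x) y"
    by (simp add: cinner_def matrix_vector_mult_def sum_distrib_right sum_distrib_left ac_simps entry)
  finally show ?thesis .
qed

lemma hermitian_cinner_quad_form:
  assumes "hermitian M"
  shows "cinner x (M *v x) = of_real (quad_form M x)"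
proof -
  have "cnj (cinner x (M *v x)) = cinner x (M *v x)"
    by (metis hermitian_cinner[OF assms] cnj_cinner)
  then show ?thesis
    unfolding quad_form_def by (metis Reals_cnj_iff complex_is_Real_iff of_real_Re)
qed

lemma psd_iff_quad_form: "psd M \<longleftrightarrow> hermitian M \<and> (\<forall>x. 0 \<le> quad_form M x)"
  by (simp add: psd_def quad_form_def cinner_def)

lemma quad_form_add_matrix: "quad_form (X + Y) x = quad_form X x + quad_form Y x"
  by (simp add: quad_form_def matrix_vector_mult_add_rdistrib cinner_add_right)

lemma quad_form_scaleR_matrix: "quad_form (c *\<^sub>R X) x = c * quad_form X x"
  by (simp add: quad_form_def scaleR_matrix_vector_mult_complex cinner_scaleR_right)

lemma psd_hermitian: "psd M \<Longrightarrow> hermitian M"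
  by (simp add: psd_def)

lemma hermitian_add: "hermitian M \<Longrightarrow> hermitian N \<Longrightarrow> hermitian (M + N)"
  by (simp add: hermitian_def conj_transpose_def vec_eq_iff)

lemma hermitian_scaleR: "hermitian M \<Longrightarrow> hermitian (c *\<^sub>R M)"
  by (simp add: hermitian_def conj_transpose_def vec_eq_iff matrix_scaleR_complex_component)

lemma hermitian_uminus: "hermitian M \<Longrightarrow> hermitian (- M)"
  by (simp add: hermitian_def conj_transpose_def vec_eq_iff)

lemma hermitian_mat_1: "hermitian (mat 1)"
  by (simp add: hermitian_def conj_transpose_def mat_def vec_eq_iff)

lemma psd_add: "psd M \<Longrightarrow> psd N \<Longrightarrow> psd (M + N)"
  by (simp add: psd_iff_quad_form hermitian_add quad_form_add_matrix)

lemma psd_scaleR: "psd M \<Longrightarrow> 0 \<le> c \<Longrightarrow> psd (c *\<^sub>R M)"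
  by (simp add: psd_iff_quad_form hermitian_scaleR quad_form_scaleR_matrix)

lemma psd_mat_1: "psd (mat 1)"
  by (simp add: psd_iff_quad_form hermitian_mat_1 quad_form_def cinner_self)

lemma trace_scaleR: "trace (c *\<^sub>R (M::complex^'n^'n)) = of_real c * trace M"
  by (simp add: trace_def matrix_scaleR_complex_component sum_distrib_left
      del: vector_scaleR_component)

lemma hermitian_trace_real: 
  assumes "hermitian M"
  shows "trace M = of_real (Re (trace M))"
proof -
  have "M$i$i \<in> \<real>" for i
    using assms unfolding hermitian_def conj_transpose_def Reals_cnj_iff by (metis vec_lambda_beta)
  then have "trace M \<in> \<real>"
    unfolding trace_def by (intro sum_in_Reals)
  then show ?thesis by (simp add: complex_is_Real_iff)
qed

section \<open>Orthonormal bases\<close>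

definition orthonormal_basis :: "('n \<Rightarrow> complex^'n) \<Rightarrow> bool" where
  "orthonormal_basis v \<longleftrightarrow> (\<forall>i j. cinner (v i) (v j) = (if i = j then 1 else 0))"

lemma orthonormal_basis_resolution_of_identity:
  fixes v :: "'n \<Rightarrow> complex^'n"
  assumes "orthonormal_basis v"
  shows "(\<Sum>i\<in>UNIV. v i $ k * cnj (v i $ l)) = (if k = l then 1 else 0)"
proof -
  define U :: "complex^'n^'n" where "U = (\<chi> k i. v i $ k)"
  have "conj_transpose U ** U = mat 1"
    using assms unfolding orthonormal_basis_def
    by (simp add: U_def conj_transpose_def matrix_matrix_mult_def mat_def vec_eq_iff cinner_def)
  then have "U ** conj_transpose U = mat 1"
    using matrix_left_right_inverse by blast
  then have "(U ** conj_transpose U) $ k $ l = mat 1 $ k $ l"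
    by simp
  then show ?thesis
    by (simp add: U_def conj_transpose_def matrix_matrix_mult_def mat_def)
qed

lemma orthonormal_basis_expansion:
  assumes "orthonormal_basis v"
  shows "x = (\<Sum>i\<in>UNIV. cinner (v i) x *s v i)"
proof -
  have "(\<Sum>i\<in>UNIV. cinner (v i) x *s v i) $ k = x $ k" for k
  proof -
    have "(\<Sum>i\<in>UNIV. cinner (v i) x *s v i) $ k
        = (\<Sum>i\<in>UNIV. \<Sum>l\<in>UNIV. x$l * (v i $ k * cnj (v i $ l)))"
      by (simp add: cinner_def sum_distrib_right sum_distrib_left sum_component mult_ac)
    also have "\<dots> = (\<Sum>l\<in>UNIV. x$l * (\<Sum>i\<in>UNIV. v i $ k * cnj (v i $ l)))"
      by (subst sum.swap) (simp add: sum_distrib_left)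
    also have "\<dots> = x $ k"
      by (simp add: orthonormal_basis_resolution_of_identity[OF assms] if_distrib cong: if_cong)
    finally show ?thesis .
  qed
  then show ?thesis by (simp add: vec_eq_iff)
qed

lemma trace_orthonormal_basis:
  assumes "orthonormal_basis v"
  shows "trace M = (\<Sum>i\<in>UNIV. cinner (v i) (M *v v i))"
proof -
  have "(\<Sum>i\<in>UNIV. cinner (v i) (M *v v i))
      = (\<Sum>i\<in>UNIV. \<Sum>k\<in>UNIV. \<Sum>l\<in>UNIV. M$k$l * (v i $ l * cnj (v i $ k)))"
    by (simp add: cinner_def matrix_vector_mult_def sum_distrib_left ac_simps)
  also have "\<dots> = (\<Sum>k\<in>UNIV. \<Sum>l\<in>UNIV. \<Sum>i\<in>UNIV. M$k$l * (v i $ l * cnj (v i $ k)))"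
    by (subst sum.swap) (intro sum.cong refl sum.swap)
  also have "\<dots> = (\<Sum>k\<in>UNIV. \<Sum>l\<in>UNIV. M$k$l * (if l = k then 1 else 0))"
    by (simp add: sum_distrib_left[symmetric] orthonormal_basis_resolution_of_identity[OF assms])
  also have "\<dots> = trace M"
    by (simp add: trace_def if_distrib cong: if_cong)
  finally show ?thesis by simp
qed

lemma orthonormal_basis_matrix_eqI:
  assumes "orthonormal_basis v" and "\<And>i. M *v v i = N *v v i"
  shows "M = N"
proof -
  have expand: "K *v x = (\<Sum>i\<in>UNIV. cinner (v i) x *s (K *v v i))" for K x
    by (subst orthonormal_basis_expansion[OF assms(1), of x])
       (simp only: matrix_vector_mult_sum matrix_vector_mult_smult)
  have "M *v x = N *v x" for x
    by (simp only: expand[of M x] expand[of N x] assms(2))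
  then show ?thesis by (simp add: matrix_eq)
qed

text \<open>The Hermitian matrix \<open>\<Sum>\<^sub>i f\<^sub>i v\<^sub>i v\<^sub>i\<^sup>*\<close>, diagonal with entries \<open>f\<close> in the basis \<open>v\<close>.\<close>

definition basis_diag :: "('n \<Rightarrow> complex^'n) \<Rightarrow> ('n \<Rightarrow> real) \<Rightarrow> complex^'n^'n" where
  "basis_diag v f = (\<chi> k l. \<Sum>i\<in>UNIV. of_real (f i) * v i $ k * cnj (v i $ l))"

lemma basis_diag_mult_vec:
  "basis_diag v f *v x = (\<Sum>i\<in>UNIV. (of_real (f i) * cinner (v i) x) *s v i)"
proof -
  have "(basis_diag v f *v x) $ k = (\<Sum>i\<in>UNIV. (of_real (f i) * cinner (v i) x) *s v i) $ k" for k
  proof -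
    have "(basis_diag v f *v x) $ k
        = (\<Sum>l\<in>UNIV. \<Sum>i\<in>UNIV. of_real (f i) * v i $ k * cnj (v i $ l) * x $ l)"
      by (simp add: basis_diag_def matrix_vector_mult_def sum_distrib_right)
    also have "\<dots> = (\<Sum>i\<in>UNIV. \<Sum>l\<in>UNIV. of_real (f i) * v i $ k * cnj (v i $ l) * x $ l)"
      by (rule sum.swap)
    also have "\<dots> = (\<Sum>i\<in>UNIV. (of_real (f i) * cinner (v i) x) *s v i) $ k"
      by (simp add: sum_component cinner_def sum_distrib_left sum_distrib_right ac_simps)
    finally show ?thesis .
  qed
  then show ?thesis by (simp add: vec_eq_iff)
qed

lemma basis_diag_eigenvector:
  assumes "orthonormal_basis v"
  shows "basis_diag v f *v v j = of_real (f j) *s v j"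
proof -
  have "basis_diag v f *v v j = (\<Sum>i\<in>UNIV. (if i = j then of_real (f j) *s v j else 0))"
    unfolding basis_diag_mult_vec using assms unfolding orthonormal_basis_def
    by (intro sum.cong refl) auto
  then show ?thesis by simp
qed

lemma basis_diag_eqI:
  assumes "orthonormal_basis v" and "\<And>i. M *v v i = of_real (f i) *s v i"
  shows "M = basis_diag v f"
  by (rule orthonormal_basis_matrix_eqI[OF assms(1)]) (simp add: basis_diag_eigenvector assms)

lemma basis_diag_mult:
  assumes "orthonormal_basis v"
  shows "basis_diag v f ** basis_diag v g = basis_diag v (\<lambda>i. f i * g i)"
  by (rule basis_diag_eqI[OF assms])
     (simp add: matrix_vector_mul_assoc[symmetric] basis_diag_eigenvector[OF assms]
       matrix_vector_mult_smult vector_smult_assoc)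

lemma basis_diag_diff: "basis_diag v f - basis_diag v g = basis_diag v (\<lambda>i. f i - g i)"
  by (simp add: basis_diag_def vec_eq_iff sum_subtractf[symmetric] left_diff_distrib)

lemma basis_diag_uminus: "- basis_diag v f = basis_diag v (\<lambda>i. - f i)"
  by (simp add: basis_diag_def vec_eq_iff sum_negf[symmetric])

lemma basis_diag_zero: "basis_diag v (\<lambda>i. 0) = 0"
  by (simp add: basis_diag_def vec_eq_iff)

lemma hermitian_basis_diag: "hermitian (basis_diag v f)"
  by (simp add: hermitian_def conj_transpose_def basis_diag_def vec_eq_iff ac_simps)

lemma quad_form_basis_diag: "quad_form (basis_diag v f) x = (\<Sum>i\<in>UNIV. f i * (cmod (cinner (v i) x))\<^sup>2)"
proof -
  have "cinner x (basis_diag v f *v x) = (\<Sum>i\<in>UNIV. of_real (f i) * (cinner (v i) x * cnj (cinner (v i) x)))"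
    by (simp add: basis_diag_mult_vec cinner_sum_right cinner_smult_right cnj_cinner ac_simps)
  also have "\<dots> = of_real (\<Sum>i\<in>UNIV. f i * (cmod (cinner (v i) x))\<^sup>2)"
    by (simp add: complex_norm_square[symmetric])
  finally show ?thesis by (simp add: quad_form_def)
qed

lemma psd_basis_diag: "(\<And>i. 0 \<le> f i) \<Longrightarrow> psd (basis_diag v f)"
  by (simp add: psd_iff_quad_form hermitian_basis_diag quad_form_basis_diag sum_nonneg)

lemma trace_basis_diag:
  assumes "orthonormal_basis v"
  shows "trace (basis_diag v f) = of_real (\<Sum>i\<in>UNIV. f i)"
  using assms
  by (simp add: trace_orthonormal_basis[OF assms] basis_diag_eigenvector cinner_smult_right
      orthonormal_basis_def)

lemma quad_form_basis_diag_basis: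
  assumes "orthonormal_basis v"
  shows "quad_form (basis_diag v f) (v i) = f i"
  using assms by (simp add: quad_form_def basis_diag_eigenvector cinner_smult_right orthonormal_basis_def)

section \<open>The spectral theorem\<close>

lemma orthogonal_complement_nonzero:
  fixes v :: "'n \<Rightarrow> complex^'n"
  assumes "a \<notin> S"
  shows "\<exists>x. x \<noteq> 0 \<and> (\<forall>j\<in>S. cinner (v j) x = 0)"
proof -
  define W :: "complex^'n^'n" where "W = (\<chi> r c. if r \<in> S then cnj (v r $ c) else 0)"
  have "row a W = 0"
    using assms by (simp add: W_def row_def vec_eq_iff)
  then have "\<not> invertible W"
    by (simp add: invertible_det_nz det_zero_row)
  then obtain x where "W *v x = 0" "x \<noteq> 0"
    using matrix_left_invertible_ker invertible_left_inverse by blast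
  moreover have "(W *v x) $ j = cinner (v j) x" if "j \<in> S" for j
    using that by (simp add: W_def matrix_vector_mult_def cinner_def)
  ultimately show ?thesis by auto
qed

lemma continuous_on_quad_form:
  fixes M :: "complex^'n^'n"
  shows "continuous_on S (quad_form M)"
proof -
  have "continuous_on S (\<lambda>x::complex^'n. x $ i)" for i
    by (rule linear_continuous_on[OF bounded_linear_vec_nth])
  then show ?thesis
    unfolding quad_form_def cinner_def matrix_vector_mult_def
    by (simp, intro continuous_intros)
qed

lemma quad_form_scaleR: "quad_form M (c *\<^sub>R x) = c\<^sup>2 * quad_form M x"
  by (simp add: quad_form_def matrix_vector_mult_scaleR_complex cinner_scaleR_left cinner_scaleR_right
      power2_eq_square)

lemma quadratic_nonpos_imp_linear_coeff_eq_0: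
  fixes s k :: real
  assumes "\<And>t. 2 * t * s + t\<^sup>2 * k \<le> 0"
  shows "s = 0"
proof -
  define d where "d = \<bar>k\<bar> + 1"
  have "d > 0" "2 * d + k > 0"
    by (auto simp: d_def)
  have "s\<^sup>2 * (2 * d + k) = d\<^sup>2 * (2 * (s / d) * s + (s / d)\<^sup>2 * k)"
    using \<open>d > 0\<close> by (simp add: field_simps power2_eq_square)
  also have "\<dots> \<le> 0"
    using assms[of "s / d"] by (simp add: mult_nonneg_nonpos)
  finally show ?thesis
    using \<open>2 * d + k > 0\<close> by (smt (verit) mult_pos_pos zero_less_power2)
qed

lemma
  assumes herm: "hermitian A" and "norm x = 1" and w: "w = A *v x - quad_form A x *\<^sub>R x"
  shows quad_form_residual_perturbation:
      "quad_form A (x + t *\<^sub>R w) = quad_form A x + 2 * t * (norm w)\<^sup>2 + t\<^sup>2 * quad_form A w"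
    and norm_residual_perturbation: "(norm (x + t *\<^sub>R w))\<^sup>2 = 1 + t\<^sup>2 * (norm w)\<^sup>2"
proof -
  define l where "l = quad_form A x"
  define s where "s = (norm w)\<^sup>2"
  have xx: "cinner x x = 1" and ww: "cinner w w = of_real s"
    using \<open>norm x = 1\<close> by (simp_all add: s_def cinner_self)
  have lx: "cinner x (A *v x) = of_real l" and cw: "cinner w (A *v w) = of_real (quad_form A w)"
    using hermitian_cinner_quad_form[OF herm] by (simp_all add: l_def)
  have xw: "cinner x w = 0" and wx: "cinner w x = 0"
    using xx lx cnj_cinner[of w x] by (simp_all add: w l_def cinner_diff_right cinner_scaleR_right)
  have Ax: "A *v x = w + l *\<^sub>R x"
    by (simp add: w l_def)
  have "cinner w (A *v x) = of_real s" and "cinner x (A *v w) = of_real s"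
    by (simp_all add: hermitian_cinner[OF herm, of x] Ax cinner_add_right cinner_add_left
        cinner_scaleR_right cinner_scaleR_left wx xw ww)
  then have "quad_form A (x + t *\<^sub>R w) = l + 2 * t * s + t\<^sup>2 * quad_form A w"
    unfolding quad_form_def[of A "x + t *\<^sub>R w"]
    by (simp add: matrix_vector_right_distrib matrix_vector_mult_scaleR_complex cinner_add_left
        cinner_add_right cinner_scaleR_left cinner_scaleR_right lx cw power2_eq_square algebra_simps)
  then show "quad_form A (x + t *\<^sub>R w) = quad_form A x + 2 * t * (norm w)\<^sup>2 + t\<^sup>2 * quad_form A w"
    by (simp add: l_def s_def)
  have "cinner (x + t *\<^sub>R w) (x + t *\<^sub>R w) = of_real (1 + t\<^sup>2 * s)"
    by (simp add: cinner_add_left cinner_add_right cinner_scaleR_left cinner_scaleR_right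
        xx xw wx ww power2_eq_square)
  then show "(norm (x + t *\<^sub>R w))\<^sup>2 = 1 + t\<^sup>2 * (norm w)\<^sup>2"
    by (simp only: cinner_self of_real_eq_iff s_def)
qed

text \<open>Perturbing the maximiser along the residual \<open>w = A x\<^sub>0 - l x\<^sub>0\<close> raises the Rayleigh quotient
  to first order by \<open>2 t \<parallel>w\<parallel>\<^sup>2\<close>, so \<open>w = 0\<close>.\<close>

lemma rayleigh_maximizer_eigenvector:
  assumes herm: "hermitian A" and V: "subspace V" and inv: "\<And>x. x \<in> V \<Longrightarrow> A *v x \<in> V"
    and x0: "x0 \<in> V" "norm x0 = 1"
    and max: "\<And>y. y \<in> V \<Longrightarrow> norm y = 1 \<Longrightarrow> quad_form A y \<le> quad_form A x0"
  shows "A *v x0 = of_real (quad_form A x0) *s x0"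
proof -
  define l where "l = quad_form A x0"
  have bound: "quad_form A y \<le> l * (norm y)\<^sup>2" if "y \<in> V" for y
  proof (cases "y = 0")
    case False
    have "quad_form A ((1 / norm y) *\<^sub>R y) \<le> l"
      using max subspace_mul[OF V that] False by (simp add: l_def)
    then show ?thesis
      using False by (simp add: quad_form_scaleR field_simps)
  qed (simp add: quad_form_def)
  define w where "w = A *v x0 - l *\<^sub>R x0"
  have "w \<in> V"
    unfolding w_def using V x0 inv by (intro subspace_diff subspace_mul)
  then have "x0 + t *\<^sub>R w \<in> V" for t
    using V x0 by (simp add: subspace_add subspace_mul)
  have w: "w = A *v x0 - quad_form A x0 *\<^sub>R x0"
    by (simp add: w_def l_def)
  have "2 * t * (norm w)\<^sup>2 + t\<^sup>2 * (quad_form A w - l * (norm w)\<^sup>2) \<le> 0" for t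
    using bound[OF \<open>x0 + t *\<^sub>R w \<in> V\<close>] quad_form_residual_perturbation[OF herm x0(2) w, of t]
      norm_residual_perturbation[OF herm x0(2) w, of t]
    by (simp add: l_def algebra_simps)
  then have "(norm w)\<^sup>2 = 0"
    by (rule quadratic_nonpos_imp_linear_coeff_eq_0)
  then have "A *v x0 = l *\<^sub>R x0"
    by (simp add: w_def)
  then show ?thesis
    by (simp add: l_def scaleR_eq_of_real_smult)
qed

lemma hermitian_eigenvector_in_invariant_subspace:
  assumes herm: "hermitian A" and V: "subspace V" and "V \<noteq> {0}"
    and inv: "\<And>x. x \<in> V \<Longrightarrow> A *v x \<in> V"
  shows "\<exists>x l. x \<in> V \<and> norm x = 1 \<and> A *v x = of_real l *s x"
proof -
  define K where "K = V \<inter> sphere 0 1"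
  have "compact K"
    unfolding K_def using V by (intro closed_Int_compact closed_subspace compact_sphere)
  moreover obtain y where "y \<in> V" "y \<noteq> 0"
    using \<open>V \<noteq> {0}\<close> subspace_0[OF V] by blast
  then have "(1 / norm y) *\<^sub>R y \<in> K"
    using V by (simp add: K_def subspace_mul)
  then have "K \<noteq> {}" by blast
  ultimately obtain x0 where "x0 \<in> K" and "\<And>y. y \<in> K \<Longrightarrow> quad_form A y \<le> quad_form A x0"
    using continuous_attains_sup[OF _ _ continuous_on_quad_form] by metis
  then show ?thesis
    using rayleigh_maximizer_eigenvector[OF herm V inv, of x0] by (auto simp: K_def)
qed

lemma hermitian_orthonormal_eigenvectors_on:
  fixes A :: "complex^'n^'n" and S :: "'n set"
  assumes herm: "hermitian A" and "finite S"
  shows "\<exists>v lam. (\<forall>i\<in>S. \<forall>j\<in>S. cinner (v i) (v j) = (if i = j then 1 else 0)) \<and>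
                 (\<forall>i\<in>S. A *v v i = of_real (lam i) *s v i)"
  using \<open>finite S\<close>
proof (induction S rule: finite_induct)
  case (insert a S)
  then obtain v lam where orth: "\<forall>i\<in>S. \<forall>j\<in>S. cinner (v i) (v j) = (if i = j then 1 else 0)"
    and eig: "\<forall>i\<in>S. A *v v i = of_real (lam i) *s v i"
    by blast
  define V where "V = {x. \<forall>j\<in>S. cinner (v j) x = 0}"
  have "subspace V"
    by (auto simp: V_def subspace_def cinner_add_right cinner_scaleR_right)
  moreover have "V \<noteq> {0}"
    using orthogonal_complement_nonzero[OF \<open>a \<notin> S\<close>, of v] by (auto simp: V_def)
  moreover have "A *v x \<in> V" if "x \<in> V" for x
    using that eig by (simp add: V_def hermitian_cinner[OF herm] cinner_smult_left)
  ultimately obtain x l where x: "x \<in> V" "norm x = 1" "A *v x = of_real l *s x"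
    using hermitian_eigenvector_in_invariant_subspace[OF herm] by blast
  have "cinner x x = 1"
    using x by (simp add: cinner_self)
  moreover have "cinner x (v j) = 0" if "j \<in> S" for j
    using x(1) that cnj_cinner[of "v j" x] by (simp add: V_def)
  ultimately show ?case
    using orth eig x \<open>a \<notin> S\<close>
    by (intro exI[of _ "v(a := x)"] exI[of _ "lam(a := l)"]) (auto simp: V_def)
qed simp

theorem hermitian_spectral:
  assumes "hermitian (A :: complex^'n^'n)"
  obtains v lam where "orthonormal_basis v" and "A = basis_diag v lam"
proof -
  obtain v lam where "orthonormal_basis v" "\<And>i. A *v v i = of_real (lam i) *s v i"
    using hermitian_orthonormal_eigenvectors_on[OF assms finite_class.finite_UNIV]
    unfolding orthonormal_basis_def by blast
  then show thesis
    using that basis_diag_eqI by blast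
qed

lemma psd_spectral:
  assumes "psd A"
  obtains v lam where "orthonormal_basis v" "\<And>i. 0 \<le> lam i" and "A = basis_diag v lam"
proof -
  obtain v lam where v: "orthonormal_basis v" and A: "A = basis_diag v lam"
    using hermitian_spectral[OF psd_hermitian[OF assms]] .
  have "0 \<le> quad_form A (v i)" for i
    using assms by (simp add: psd_iff_quad_form)
  then have "0 \<le> lam i" for i
    using quad_form_basis_diag_basis[OF v] by (simp add: A)
  then show thesis
    using that v A by blast
qed

section \<open>Positive and negative parts\<close>

lemma conj_transpose_mult: "conj_transpose (X ** Y) = conj_transpose Y ** conj_transpose (X::complex^'n^'n)"
  by (simp add: conj_transpose_def matrix_matrix_mult_def vec_eq_iff ac_simps)

lemma hermitian_mult_eq_0_commute:
  assumes "hermitian P" "hermitian N" "P ** N = 0"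
  shows "N ** P = 0"
proof -
  have "N ** P = conj_transpose (P ** N)"
    using assms(1,2) by (simp add: conj_transpose_mult hermitian_def)
  then show ?thesis
    using assms(3) by (simp add: conj_transpose_def vec_eq_iff)
qed

lemma hermitian_square_kernel:
  assumes "hermitian P" and "P *v (P *v x) = 0"
  shows "P *v x = 0"
proof -
  have "cinner (P *v x) (P *v x) = 0"
    using assms by (simp flip: hermitian_cinner)
  then show ?thesis
    by (simp add: cinner_self)
qed

lemma psd_eigenvector_negative_eq_0:
  assumes "psd R" and "R *v u = of_real c *s u" and "c < 0"
  shows "u = 0"
proof -
  have "quad_form R u = c * (norm u)\<^sup>2"
    using assms(2) by (simp add: quad_form_def cinner_smult_right cinner_self)
  moreover have "0 \<le> quad_form R u"
    using assms(1) by (simp add: psd_iff_quad_form)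
  ultimately show ?thesis
    using assms(3) by (simp add: zero_le_mult_iff)
qed

lemma jordan_part_eigenvector:
  assumes P: "psd P" and N: "psd N" and PN: "P ** N = 0" and A: "A = P - N"
    and eig: "A *v x = of_real l *s x"
  shows "P *v x = of_real (max l 0) *s x"
proof -
  have NP: "N ** P = 0"
    using hermitian_mult_eq_0_commute[OF psd_hermitian[OF P] psd_hermitian[OF N] PN] .
  have "P *v (N *v x) = 0" and "N *v (P *v x) = 0"
    using PN NP by (simp_all add: matrix_vector_mul_assoc)
  then have "P *v (A *v x) = P *v (P *v x)" and "N *v (A *v x) = - (N *v (N *v x))"
    by (simp_all add: A matrix_vector_mult_diff_rdistrib matrix_vector_mult_diff_distrib)
  then have PPx: "P *v (P *v x) = of_real l *s (P *v x)"
    and NNx: "N *v (N *v x) = of_real (- l) *s (N *v x)"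
    by (simp_all add: eig matrix_vector_mult_smult vector_smult_lneg)
  consider "l < 0" | "l = 0" | "l > 0"
    by linarith
  then show ?thesis
  proof cases
    case 1
    then show ?thesis
      using psd_eigenvector_negative_eq_0[OF P PPx] by simp
  next
    case 2
    then show ?thesis
      using hermitian_square_kernel[OF psd_hermitian[OF P]] PPx by simp
  next
    case 3
    then have "N *v x = 0"
      using psd_eigenvector_negative_eq_0[OF N NNx] by simp
    then show ?thesis
      using 3 eig by (simp add: A matrix_vector_mult_diff_rdistrib)
  qed
qed

lemma
  assumes "orthonormal_basis v"
  shows pos_part_basis_diag: "pos_part (basis_diag v f) = basis_diag v (\<lambda>i. max (f i) 0)"
    and neg_part_basis_diag: "neg_part (basis_diag v f) = basis_diag v (\<lambda>i. max (- f i) 0)"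
proof -
  define A where "A = basis_diag v f"
  define P0 where "P0 = basis_diag v (\<lambda>i. max (f i) 0)"
  define N0 where "N0 = basis_diag v (\<lambda>i. max (- f i) 0)"
  have "(\<lambda>i. max (f i) 0 - max (- f i) 0) = f" "(\<lambda>i. max (f i) 0 * max (- f i) 0) = (\<lambda>i. 0)"
    by (auto simp: fun_eq_iff max_def)
  then have decomp: "psd P0 \<and> psd N0 \<and> A = P0 - N0 \<and> P0 ** N0 = 0"
    by (simp add: A_def P0_def N0_def psd_basis_diag basis_diag_diff basis_diag_mult[OF assms]
        basis_diag_zero)
  have unique: "P = P0 \<and> N = N0" if "psd P" "psd N" "A = P - N" "P ** N = 0" for P N
  proof -
    have "P = P0"
      unfolding P0_def using assms
      by (rule basis_diag_eqI)
         (intro jordan_part_eigenvector[OF that(1,2,4,3)]; simp add: A_def basis_diag_eigenvector[OF assms])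
    moreover have "N = P - A"
      using that(3) by simp
    moreover have "N0 = P0 - A"
      using decomp by simp
    ultimately show ?thesis
      by simp
  qed
  show "pos_part A = P0"
    unfolding pos_part_def by (rule the_equality) (use decomp unique in blast)+
  show "neg_part A = N0"
    unfolding neg_part_def by (rule the_equality) (use decomp unique in blast)+
qed

lemma
  assumes "hermitian A"
  shows psd_pos_part: "psd (pos_part A)"
    and psd_neg_part: "psd (neg_part A)"
    and pos_part_minus_neg_part: "pos_part A - neg_part A = A"
proof -
  obtain v f where v: "orthonormal_basis v" and A: "A = basis_diag v f"
    using hermitian_spectral[OF assms] .
  have "(\<lambda>i. max (f i) 0 - max (- f i) 0) = f"
    by (auto simp: fun_eq_iff max_def)
  then show "psd (pos_part A)" "psd (neg_part A)" "pos_part A - neg_part A = A"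
    by (simp_all add: A pos_part_basis_diag[OF v] neg_part_basis_diag[OF v] psd_basis_diag
        basis_diag_diff)
qed

lemma neg_part_eq_pos_part_uminus:
  assumes "hermitian A"
  shows "neg_part A = pos_part (- A)"
proof -
  obtain v f where v: "orthonormal_basis v" and A: "A = basis_diag v f"
    using hermitian_spectral[OF assms] .
  show ?thesis
    by (simp add: A basis_diag_uminus pos_part_basis_diag[OF v] neg_part_basis_diag[OF v])
qed

section \<open>The trace norm\<close>

lemma psd_sqrt_eigenvector:
  assumes R: "psd R" and "0 \<le> c" and RRx: "R *v (R *v x) = of_real (c * c) *s x"
  shows "R *v x = of_real c *s x"
proof (cases "c = 0")
  case True
  then show ?thesis
    using hermitian_square_kernel[OF psd_hermitian[OF R]] RRx by simp
next
  case False
  define u where "u = R *v x - of_real c *s x"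
  have "R *v u = of_real (- c) *s u"
    by (simp add: u_def matrix_vector_mult_diff_distrib matrix_vector_mult_smult RRx
        vector_smult_assoc vector_ssub_ldistrib algebra_simps)
  moreover have "- c < 0"
    using False \<open>0 \<le> c\<close> by simp
  ultimately have "u = 0"
    by (rule psd_eigenvector_negative_eq_0[OF R])
  then show ?thesis
    by (simp add: u_def)
qed

lemma psd_sqrt_basis_diag:
  assumes v: "orthonormal_basis v" and f: "\<And>i. 0 \<le> f i"
  shows "psd_sqrt (basis_diag v (\<lambda>i. f i * f i)) = basis_diag v f"
  unfolding psd_sqrt_def
proof (rule the_equality)
  show "psd (basis_diag v f) \<and> basis_diag v f ** basis_diag v f = basis_diag v (\<lambda>i. f i * f i)"
    using psd_basis_diag[OF f] basis_diag_mult[OF v] by simp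
  fix R
  assume "psd R \<and> R ** R = basis_diag v (\<lambda>i. f i * f i)"
  then show "R = basis_diag v f"
    using v f
    by (intro basis_diag_eqI psd_sqrt_eigenvector)
       (auto simp: matrix_vector_mul_assoc basis_diag_eigenvector)
qed

lemma trace_norm_basis_diag:
  assumes v: "orthonormal_basis v" and f: "\<And>i. 0 \<le> f i"
  shows "trace_norm (basis_diag v f) = (\<Sum>i\<in>UNIV. f i)"
proof -
  have "conj_transpose (basis_diag v f) ** basis_diag v f = basis_diag v (\<lambda>i. f i * f i)"
    using hermitian_basis_diag[of v f] by (simp add: hermitian_def basis_diag_mult[OF v])
  then show ?thesis
    by (simp add: trace_norm_def psd_sqrt_basis_diag[OF v f] trace_basis_diag[OF v])
qed

lemma trace_norm_psd:
  assumes "psd X"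
  shows "trace_norm X = Re (trace X)"
proof -
  obtain v f where v: "orthonormal_basis v" and f: "\<And>i. 0 \<le> f i" and X: "X = basis_diag v f"
    using psd_spectral[OF assms] by blast
  show ?thesis
    by (simp add: X trace_norm_basis_diag[OF v f] trace_basis_diag[OF v])
qed

lemma psd_trace_eq_0_imp_eq_0:
  assumes "psd X" and "trace X = 0"
  shows "X = 0"
proof -
  obtain v f where v: "orthonormal_basis v" and f: "\<And>i. 0 \<le> f i" and X: "X = basis_diag v f"
    using psd_spectral[OF assms(1)] by blast
  have "(\<Sum>i\<in>UNIV. f i) = 0"
    using assms(2) trace_basis_diag[OF v, of f] by (simp only: X of_real_eq_0_iff)
  then have "f = (\<lambda>i. 0)"
    using f by (simp add: sum_nonneg_eq_0_iff fun_eq_iff)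
  then show ?thesis
    by (simp add: X basis_diag_zero)
qed

lemma Re_trace_eq_trace_norm_parts:
  assumes "hermitian A"
  shows "Re (trace A) = trace_norm (pos_part A) - trace_norm (neg_part A)"
proof -
  have "trace A = trace (pos_part A) - trace (neg_part A)"
    using trace_sub[of "pos_part A" "neg_part A"] by (simp add: pos_part_minus_neg_part[OF assms])
  then show ?thesis
    by (simp add: trace_norm_psd psd_pos_part[OF assms] psd_neg_part[OF assms])
qed

text \<open>Each positive eigenvalue \<open>\<mu>\<^sub>i = \<langle>w\<^sub>i, C w\<^sub>i\<rangle> - \<langle>w\<^sub>i, D w\<^sub>i\<rangle>\<close> of \<open>B\<close> is at most
  \<open>\<langle>w\<^sub>i, C w\<^sub>i\<rangle>\<close>; summing over the eigenbasis gives \<open>tr C\<close>.\<close>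

lemma trace_norm_pos_part_le:
  assumes "hermitian B" and C: "psd C" and D: "psd D" and "B = C - D"
  shows "trace_norm (pos_part B) \<le> Re (trace C)"
proof -
  obtain w mu where w: "orthonormal_basis w" and B: "B = basis_diag w mu"
    using hermitian_spectral[OF assms(1)] .
  have "max (mu i) 0 \<le> quad_form C (w i)" for i
  proof -
    have "mu i = quad_form C (w i) - quad_form D (w i)"
      using quad_form_basis_diag_basis[OF w, of mu i] \<open>B = C - D\<close>
      by (simp add: B quad_form_def matrix_vector_mult_diff_rdistrib cinner_diff_right)
    moreover have "0 \<le> quad_form C (w i)" "0 \<le> quad_form D (w i)"
      using C D by (simp_all add: psd_iff_quad_form)
    ultimately show ?thesis
      by simp
  qed
  then have "(\<Sum>i\<in>UNIV. max (mu i) 0) \<le> (\<Sum>i\<in>UNIV. quad_form C (w i))"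
    by (rule sum_mono)
  then show ?thesis
    by (simp add: B pos_part_basis_diag[OF w] trace_norm_basis_diag[OF w] trace_orthonormal_basis[OF w]
        quad_form_def)
qed

section \<open>Positive trace-preserving maps\<close>

lemma psd_trace_nonneg:
  assumes "psd X"
  shows "0 \<le> Re (trace X)"
proof -
  obtain v f where v: "orthonormal_basis v" and f: "\<And>i. 0 \<le> f i" and X: "X = basis_diag v f"
    using psd_spectral[OF assms] by blast
  show ?thesis
    using f by (simp add: X trace_basis_diag[OF v] sum_nonneg)
qed

lemma density_matrix_exists: "\<exists>\<sigma> :: complex^'k^'k. psd \<sigma> \<and> trace \<sigma> = 1"
proof (intro exI conjI)
  show "psd ((1 / real CARD('k)) *\<^sub>R mat 1 :: complex^'k^'k)"
    by (simp add: psd_scaleR psd_mat_1)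
  show "trace ((1 / real CARD('k)) *\<^sub>R mat 1 :: complex^'k^'k) = 1"
    by (simp add: trace_scaleR trace_I)
qed

lemma density_matrix_scaled_decomposition:
  assumes C: "psd C" and \<sigma>: "psd \<sigma>" "trace \<sigma> = 1" and a: "Re (trace C) \<le> a"
  shows "\<exists>M. psd M \<and> trace M = 1 \<and> a *\<^sub>R M = C + (a - Re (trace C)) *\<^sub>R \<sigma>"
proof -
  define t where "t = Re (trace C)"
  have trC: "trace C = of_real t"
    unfolding t_def by (rule hermitian_trace_real[OF psd_hermitian[OF C]])
  have "0 \<le> t" and "t \<le> a"
    using psd_trace_nonneg[OF C] a by (simp_all add: t_def)
  show ?thesis
  proof (cases "a = 0")
    case True
    then have "C = 0"
      using \<open>0 \<le> t\<close> \<open>t \<le> a\<close> trC psd_trace_eq_0_imp_eq_0[OF C] by simp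
    then show ?thesis
      using True \<sigma> by (intro exI[of _ \<sigma>]) (simp add: trace_def)
  next
    case False
    then have "0 < a"
      using \<open>0 \<le> t\<close> \<open>t \<le> a\<close> by simp
    define M where "M = (1 / a) *\<^sub>R (C + (a - t) *\<^sub>R \<sigma>)"
    have "trace M = of_real ((1 / a) * (t + (a - t)))"
      by (simp add: M_def trace_add trace_scaleR trC \<sigma> flip: of_real_add)
    then have "trace M = 1"
      using \<open>0 < a\<close> by simp
    moreover have "psd M"
      unfolding M_def using C \<sigma> \<open>t \<le> a\<close> \<open>0 < a\<close> by (simp add: psd_add psd_scaleR)
    moreover have "a *\<^sub>R M = C + (a - t) *\<^sub>R \<sigma>"
      using \<open>0 < a\<close> by (simp add: M_def)
    ultimately show ?thesis
      unfolding t_def by blast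
  qed
qed

text \<open>The trace of the compression of \<open>X\<close> to the span of \<open>{v i | i \<in> S}\<close>.\<close>

definition compression_trace :: "('n \<Rightarrow> complex^'n) \<Rightarrow> 'n set \<Rightarrow> complex^'n^'n \<Rightarrow> real" where
  "compression_trace v S X = (\<Sum>i\<in>S. quad_form X (v i))"

lemma compression_trace_add: "compression_trace v S (X + Y) = compression_trace v S X + compression_trace v S Y"
  by (simp add: compression_trace_def quad_form_add_matrix sum.distrib)

lemma compression_trace_scaleR: "compression_trace v S (c *\<^sub>R X) = c * compression_trace v S X"
  by (simp add: compression_trace_def quad_form_scaleR_matrix sum_distrib_left)

lemma compression_trace_nonneg: "psd X \<Longrightarrow> 0 \<le> compression_trace v S X"
  by (simp add: compression_trace_def psd_iff_quad_form sum_nonneg)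

lemma compression_trace_le_trace:
  assumes "orthonormal_basis v" and "psd X"
  shows "compression_trace v S X \<le> Re (trace X)"
proof -
  have "compression_trace v S X \<le> (\<Sum>i\<in>UNIV. quad_form X (v i))"
    unfolding compression_trace_def using assms(2)
    by (intro sum_mono2) (auto simp: psd_iff_quad_form)
  also have "\<dots> = Re (trace X)"
    by (simp add: trace_orthonormal_basis[OF assms(1)] quad_form_def)
  finally show ?thesis .
qed

lemma compression_trace_positive_eigenspace:
  assumes v: "orthonormal_basis v"
  shows "compression_trace v {i. 0 < f i} (basis_diag v f) = trace_norm (pos_part (basis_diag v f))"
proof -
  have "compression_trace v {i. 0 < f i} (basis_diag v f) = (\<Sum>i\<in>{i. 0 < f i}. f i)"
    by (simp add: compression_trace_def quad_form_basis_diag_basis[OF v])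
  also have "\<dots> = (\<Sum>i\<in>UNIV. max (f i) 0)"
    by (intro sum.mono_neutral_cong_left) (auto simp: max_def)
  also have "\<dots> = trace_norm (pos_part (basis_diag v f))"
    by (simp add: pos_part_basis_diag[OF v] trace_norm_basis_diag[OF v])
  finally show ?thesis .
qed

definition positive_trace_preserving :: "(complex^'n^'n \<Rightarrow> complex^'k^'k) \<Rightarrow> bool" where
  "positive_trace_preserving \<Phi> \<longleftrightarrow>
     (\<forall>X. hermitian X \<longrightarrow> hermitian (\<Phi> X)) \<and>
     (\<forall>X Y. hermitian X \<longrightarrow> hermitian Y \<longrightarrow> \<Phi> (X + Y) = \<Phi> X + \<Phi> Y) \<and>
     (\<forall>(c::real) X. hermitian X \<longrightarrow> \<Phi> (c *\<^sub>R X) = c *\<^sub>R \<Phi> X) \<and>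
     (\<forall>X. psd X \<longrightarrow> psd (\<Phi> X)) \<and>
     (\<forall>X. hermitian X \<longrightarrow> trace (\<Phi> X) = trace X)"

lemma
  assumes "positive_trace_preserving \<Phi>" and X: "hermitian X"
  shows positive_trace_preserving_uminus: "\<Phi> (- X) = - \<Phi> X"
    and positive_trace_preserving_diff: "hermitian Y \<Longrightarrow> \<Phi> (Y - X) = \<Phi> Y - \<Phi> X"
proof -
  have add: "\<And>X Y. hermitian X \<Longrightarrow> hermitian Y \<Longrightarrow> \<Phi> (X + Y) = \<Phi> X + \<Phi> Y"
    and scale: "\<And>c X. hermitian X \<Longrightarrow> \<Phi> (c *\<^sub>R X) = c *\<^sub>R \<Phi> X"
    using assms(1) unfolding positive_trace_preserving_def by blast+
  show uminus: "\<Phi> (- X) = - \<Phi> X"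
    using scale[OF X, of "-1"] by simp
  show "hermitian Y \<Longrightarrow> \<Phi> (Y - X) = \<Phi> Y - \<Phi> X"
    using add[OF _ hermitian_uminus[OF X], of Y] by (simp add: uminus)
qed

lemma positive_trace_preserving_pos_part_le:
  assumes \<Phi>: "positive_trace_preserving \<Phi>" and A: "hermitian A"
  shows "trace_norm (pos_part (\<Phi> A)) \<le> trace_norm (pos_part A)"
proof -
  have "\<Phi> A = \<Phi> (pos_part A) - \<Phi> (neg_part A)"
    using positive_trace_preserving_diff[OF \<Phi> psd_hermitian[OF psd_neg_part[OF A]]
        psd_hermitian[OF psd_pos_part[OF A]]]
    by (simp add: pos_part_minus_neg_part[OF A])
  then have "trace_norm (pos_part (\<Phi> A)) \<le> Re (trace (\<Phi> (pos_part A)))"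
    using \<Phi> A psd_pos_part[OF A] psd_neg_part[OF A] unfolding positive_trace_preserving_def
    by (intro trace_norm_pos_part_le) auto
  also have "\<dots> = trace_norm (pos_part A)"
    using \<Phi> psd_pos_part[OF A] unfolding positive_trace_preserving_def
    by (simp add: psd_hermitian trace_norm_psd)
  finally show ?thesis .
qed

lemma positive_trace_preserving_neg_part_le:
  assumes \<Phi>: "positive_trace_preserving \<Phi>" and A: "hermitian A"
  shows "trace_norm (neg_part (\<Phi> A)) \<le> trace_norm (neg_part A)"
proof -
  have "\<Phi> (- A) = - \<Phi> A"
    by (rule positive_trace_preserving_uminus[OF \<Phi> A])
  moreover have "hermitian (\<Phi> A)"
    using \<Phi> A by (simp add: positive_trace_preserving_def)
  ultimately show ?thesis
    using positive_trace_preserving_pos_part_le[OF \<Phi> hermitian_uminus[OF A]]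
    by (simp add: neg_part_eq_pos_part_uminus A)
qed

lemma measure_prepare_positive_trace_preserving:
  fixes f :: "complex^'n^'n \<Rightarrow> real" and M1 M2 :: "complex^'k^'k"
  assumes f_add: "\<And>X Y. f (X + Y) = f X + f Y" and f_scaleR: "\<And>c X. f (c *\<^sub>R X) = c * f X"
    and f_nonneg: "\<And>X. psd X \<Longrightarrow> 0 \<le> f X" and f_le: "\<And>X. psd X \<Longrightarrow> f X \<le> Re (trace X)"
    and M: "psd M1" "psd M2" "trace M1 = 1" "trace M2 = 1"
  shows "positive_trace_preserving (\<lambda>X. f X *\<^sub>R M1 + (Re (trace X) - f X) *\<^sub>R M2)"
  unfolding positive_trace_preserving_def
proof (intro conjI allI impI)
  fix X Y :: "complex^'n^'n" and c :: real
  show "hermitian (f X *\<^sub>R M1 + (Re (trace X) - f X) *\<^sub>R M2)"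
    using M by (simp add: psd_hermitian hermitian_add hermitian_scaleR)
  show "f (X + Y) *\<^sub>R M1 + (Re (trace (X + Y)) - f (X + Y)) *\<^sub>R M2
      = f X *\<^sub>R M1 + (Re (trace X) - f X) *\<^sub>R M2 + (f Y *\<^sub>R M1 + (Re (trace Y) - f Y) *\<^sub>R M2)"
    by (simp add: f_add trace_add algebra_simps)
  show "f (c *\<^sub>R X) *\<^sub>R M1 + (Re (trace (c *\<^sub>R X)) - f (c *\<^sub>R X)) *\<^sub>R M2
      = c *\<^sub>R (f X *\<^sub>R M1 + (Re (trace X) - f X) *\<^sub>R M2)"
    by (simp add: f_scaleR trace_scaleR algebra_simps)
  assume "psd X"
  then show "psd (f X *\<^sub>R M1 + (Re (trace X) - f X) *\<^sub>R M2)"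
    using M f_nonneg f_le by (simp add: psd_add psd_scaleR)
next
  fix X :: "complex^'n^'n"
  assume "hermitian X"
  have "trace (f X *\<^sub>R M1 + (Re (trace X) - f X) *\<^sub>R M2) = of_real (f X) + of_real (Re (trace X) - f X)"
    using M by (simp add: trace_add trace_scaleR)
  also have "\<dots> = of_real (Re (trace X))"
    by simp
  also have "\<dots> = trace X"
    by (rule hermitian_trace_real[OF \<open>hermitian X\<close>, symmetric])
  finally show "trace (f X *\<^sub>R M1 + (Re (trace X) - f X) *\<^sub>R M2) = trace X" .
qed

text \<open>Sufficiency: measure \<open>X\<close> against the positive eigenspace of \<open>A\<close>, which sends \<open>A\<close> to the
  weights \<open>\<parallel>A\<^sub>+\<parallel>\<^sub>1\<close> and \<open>-\<parallel>A\<^sub>-\<parallel>\<^sub>1\<close>, and prepare \<open>B\<^sub>+\<close> and \<open>B\<^sub>-\<close>, each padded with the same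
  multiple \<open>\<parallel>A\<^sub>+\<parallel>\<^sub>1 - \<parallel>B\<^sub>+\<parallel>\<^sub>1 = \<parallel>A\<^sub>-\<parallel>\<^sub>1 - \<parallel>B\<^sub>-\<parallel>\<^sub>1\<close> of a fixed density matrix.\<close>

lemma positive_trace_preserving_exists:
  fixes A :: "complex^'n^'n" and B :: "complex^'k^'k"
  assumes A: "hermitian A" and B: "hermitian B" and tr: "trace A = trace B"
    and pos: "trace_norm (pos_part B) \<le> trace_norm (pos_part A)"
    and neg: "trace_norm (neg_part B) \<le> trace_norm (neg_part A)"
  shows "\<exists>\<Phi>. positive_trace_preserving \<Phi> \<and> \<Phi> A = B"
proof -
  obtain v lam where v: "orthonormal_basis v" and A_eq: "A = basis_diag v lam"
    using hermitian_spectral[OF A] .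
  define f where "f = compression_trace v {i. 0 < lam i}"
  obtain \<sigma> :: "complex^'k^'k" where \<sigma>: "psd \<sigma>" "trace \<sigma> = 1"
    using density_matrix_exists by blast
  define d where "d = trace_norm (pos_part A) - trace_norm (pos_part B)"
  have d_neg: "d = trace_norm (neg_part A) - trace_norm (neg_part B)"
    using Re_trace_eq_trace_norm_parts[OF A] Re_trace_eq_trace_norm_parts[OF B] tr
    by (simp add: d_def)
  obtain M1 where M1: "psd M1" "trace M1 = 1"
    and M1_eq: "trace_norm (pos_part A) *\<^sub>R M1 = pos_part B + d *\<^sub>R \<sigma>"
    using density_matrix_scaled_decomposition[OF psd_pos_part[OF B] \<sigma>, of "trace_norm (pos_part A)"]
      pos trace_norm_psd[OF psd_pos_part[OF B]] by (auto simp: d_def)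
  obtain M2 where M2: "psd M2" "trace M2 = 1"
    and M2_eq: "trace_norm (neg_part A) *\<^sub>R M2 = neg_part B + d *\<^sub>R \<sigma>"
    using density_matrix_scaled_decomposition[OF psd_neg_part[OF B] \<sigma>, of "trace_norm (neg_part A)"]
      neg trace_norm_psd[OF psd_neg_part[OF B]] by (auto simp: d_neg)
  define \<Phi> where "\<Phi> X = f X *\<^sub>R M1 + (Re (trace X) - f X) *\<^sub>R M2" for X
  have fA: "f A = trace_norm (pos_part A)"
    by (simp add: f_def A_eq compression_trace_positive_eigenspace[OF v])
  have "positive_trace_preserving \<Phi>"
    unfolding \<Phi>_def f_def using v M1 M2
    by (intro measure_prepare_positive_trace_preserving compression_trace_add compression_trace_scaleR
        compression_trace_nonneg compression_trace_le_trace)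
  moreover have "\<Phi> A = B"
    using fA Re_trace_eq_trace_norm_parts[OF A] pos_part_minus_neg_part[OF B]
    by (simp add: \<Phi>_def M1_eq M2_eq)
  ultimately show ?thesis
    by blast
qed

theorem theorem3:
  fixes A :: "complex^'n^'n" and B :: "complex^'k^'k"
  assumes "hermitian A" and "hermitian B"
  shows "(\<exists>\<Phi> :: complex^'n^'n \<Rightarrow> complex^'k^'k.
            (\<forall>X. hermitian X \<longrightarrow> hermitian (\<Phi> X)) \<and>
            (\<forall>X Y. hermitian X \<longrightarrow> hermitian Y \<longrightarrow> \<Phi> (X + Y) = \<Phi> X + \<Phi> Y) \<and>
            (\<forall>(c::real) X. hermitian X \<longrightarrow> \<Phi> (c *\<^sub>R X) = c *\<^sub>R \<Phi> X) \<and>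
            (\<forall>X. psd X \<longrightarrow> psd (\<Phi> X)) \<and>
            (\<forall>X. hermitian X \<longrightarrow> trace (\<Phi> X) = trace X) \<and>
            \<Phi> A = B)
         \<longleftrightarrow> (trace A = trace B \<and>
              trace_norm (pos_part A) \<ge> trace_norm (pos_part B) \<and>
              trace_norm (neg_part A) \<ge> trace_norm (neg_part B))"
proof -
  have "(\<exists>\<Phi>. positive_trace_preserving \<Phi> \<and> \<Phi> A = B)
      \<longleftrightarrow> (trace A = trace B \<and>
           trace_norm (pos_part A) \<ge> trace_norm (pos_part B) \<and>
           trace_norm (neg_part A) \<ge> trace_norm (neg_part B))"
  proof
    assume "\<exists>\<Phi>. positive_trace_preserving \<Phi> \<and> \<Phi> A = B"
    then obtain \<Phi> where \<Phi>: "positive_trace_preserving \<Phi>" and "\<Phi> A = B"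
      by blast
    then show "trace A = trace B \<and>
           trace_norm (pos_part A) \<ge> trace_norm (pos_part B) \<and>
           trace_norm (neg_part A) \<ge> trace_norm (neg_part B)"
      using positive_trace_preserving_pos_part_le[OF \<Phi> assms(1)]
        positive_trace_preserving_neg_part_le[OF \<Phi> assms(1)] assms(1)
      by (auto simp: positive_trace_preserving_def)
  qed (use positive_trace_preserving_exists[OF assms] in blast)
  then show ?thesis
    by (simp add: positive_trace_preserving_def conj_assoc)
qed

end
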